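(* For every integer $n \geq 3$, $$\Delta_n(FP/ES) = \frac{2^{n-2}}{n-1} \quad\text{and}\quad \Delta_n(ES/FP) = \frac{n-1}{2},$$ where $$\Delta_n(FP/ES) = \max_{T\in RB(n)}\ \max_{i\in[n]}\ \sup_{l>0} \frac{FP_T(i)}{ES_T(i)},\qquad \Delta_n(ES/FP) = \max_{T\in RB(n)}\ \max_{i\in[n]}\ \sup_{l>0} \frac{ES_T(i)}{FP_T(i)},$$ the suprema being taken over all assignments $l$ of strictly positive lengths to the edges of $T$. Moreover, both equalities remain true if the suprema are restricted to positive edge-length assignments satisfying the molecular clock condition (MC).
   Context: $[n]=\{1,\dots,n\}$. A rooted binary phylogenetic tree on $[n]$ is a rooted tree with root $\rho$ and leaf set $[n]$ in which every non-leaf vertex (including $\rho$) is unlabelled and has out-degree exactly 2. Two such trees are identified if there is a graph isomorphism between them that sends leaf $x$ to leaf $x$ for every $x$. $RB(n)$ denotes the (finite) set of all such trees. Each edge $e$ carries a length $l(e)>0$. For an edge $e$, $n(e)$ is the number of leaves descended from $e$ (that is, below its endpoint farther from the root). $P(T;\rho,i)$ is the path from $\rho$ to leaf $i$. The Fair Proportion index is $FP_T(i)=\sum_{e\in P(T;\rho,i)} l(e)/n(e)$. The Equal Splits index is $ES_T(i)=\sum_{e\in P(T;\rho,i)} l(e)/\Pi(e,i)$, where $\Pi(e,i)=1$ if $e$ is the pendant edge incident with $i$, and otherwise $\Pi(e,i)$ is the product of the out-degrees of the interior vertices on the directed path from the lower endpoint of $e$ to $i$. In a binary tree this equals $2^{k}$,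 where $k$ is the number of edges strictly between $e$ and $i$. Molecular clock condition (MC): the sum of the edge lengths on the path from $\rho$ to leaf $i$ is the same for every leaf $i$. *)

theory Defs
  imports Main "HOL-Library.Extended_Real"
begin

text \<open>The order of the
  two children is irrelevant for the quantities below (max over trees is the same).\<close>
datatype ptree = Leaf nat | Node ptree ptree

fun leaf_list :: "ptree \<Rightarrow> nat list" where
  "leaf_list (Leaf x) = [x]"
| "leaf_list (Node a b) = leaf_list a @ leaf_list b"

definition leaves :: "ptree \<Rightarrow> nat set" where
  "leaves t = set (leaf_list t)"

text \<open>Vertices are addressed by positions (paths from the root; False = left child).\<close>
fun pos :: "ptree \<Rightarrow> bool list set" where
  "pos (Leaf x) = {[]}"
| "pos (Node a b) = insert [] (Cons False ` pos a \<union> Cons True ` pos b)"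

fun subtree :: "ptree \<Rightarrow> bool list \<Rightarrow> ptree" where
  "subtree t [] = t"
| "subtree (Node a b) (False # p) = subtree a p"
| "subtree (Node a b) (True # p) = subtree b p"
| "subtree (Leaf x) (_ # p) = Leaf x"

text \<open>Edges correspond to non-root vertices (the edge into that vertex from its parent).\<close>
definition edges :: "ptree \<Rightarrow> bool list set" where
  "edges t = pos t - {[]}"

definition RB :: "nat \<Rightarrow> ptree set" where
  "RB n = {t. distinct (leaf_list t) \<and> set (leaf_list t) = {1..n}}"

definition nbelow :: "ptree \<Rightarrow> bool list \<Rightarrow> nat" where
  "nbelow t e = card (leaves (subtree t e))"

definition rpath :: "ptree \<Rightarrow> nat \<Rightarrow> bool list set" where
  "rpath t i = {e \<in> edges t. i \<in> leaves (subtree t e)}"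

definition PiES :: "ptree \<Rightarrow> bool list \<Rightarrow> nat \<Rightarrow> real" where
  "PiES t e i = 2 ^ card {e' \<in> rpath t i. length e < length e'}"

definition FP :: "ptree \<Rightarrow> (bool list \<Rightarrow> real) \<Rightarrow> nat \<Rightarrow> real" where
  "FP t l i = (\<Sum>e\<in>rpath t i. l e / real (nbelow t e))"

definition ES :: "ptree \<Rightarrow> (bool list \<Rightarrow> real) \<Rightarrow> nat \<Rightarrow> real" where
  "ES t l i = (\<Sum>e\<in>rpath t i. l e / PiES t e i)"

text \<open>Positive edge-length assignments (values off the edges are irrelevant).\<close>
definition pos_lengths :: "ptree \<Rightarrow> (bool list \<Rightarrow> real) set" where
  "pos_lengths t = {l. \<forall>e\<in>edges t. 0 < l e}"

definition MC :: "nat \<Rightarrow> ptree \<Rightarrow> (bool list \<Rightarrow> real) \<Rightarrow> bool" where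
  "MC n t l = (\<forall>i\<in>{1..n}. \<forall>j\<in>{1..n}. (\<Sum>e\<in>rpath t i. l e) = (\<Sum>e\<in>rpath t j. l e))"

definition Delta :: "nat \<Rightarrow> (ptree \<Rightarrow> (bool list \<Rightarrow> real) \<Rightarrow> nat \<Rightarrow> real)
    \<Rightarrow> (ptree \<Rightarrow> (bool list \<Rightarrow> real) \<Rightarrow> nat \<Rightarrow> real) \<Rightarrow> ereal" where
  "Delta n A B = (SUP t\<in>RB n. SUP i\<in>{1..n}. SUP l\<in>pos_lengths t. ereal (A t l i / B t l i))"

definition Delta_MC :: "nat \<Rightarrow> (ptree \<Rightarrow> (bool list \<Rightarrow> real) \<Rightarrow> nat \<Rightarrow> real)
    \<Rightarrow> (ptree \<Rightarrow> (bool list \<Rightarrow> real) \<Rightarrow> nat \<Rightarrow> real) \<Rightarrow> ereal" where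
  "Delta_MC n A B = (SUP t\<in>RB n. SUP i\<in>{1..n}.
      SUP l\<in>{l \<in> pos_lengths t. MC n t l}. ereal (A t l i / B t l i))"

end

theory Submission
  imports Defs
begin

text \<open>Let \<open>e\<close> be an edge on the path from the root to leaf \<open>i\<close> with \<open>k\<close> path edges
  strictly below it. Each of the \<open>k\<close> interior vertices of the path below \<open>e\<close> has a leaf
  off the path, so together with \<open>i\<close> we get \<open>k + 1 \<le> n(e) \<le> n - 1\<close>, and \<open>n(e) = 1\<close>
  if \<open>k = 0\<close>. Hence the ratios \<open>2^k / n(e)\<close> and \<open>n(e) / 2^k\<close> of the FP and ES summands
  of \<open>e\<close> are at most \<open>2^k / (k + 1) \<le> 2^(n-2) / (n - 1)\<close> and \<open>(n - 1) / 2\<close>, and so are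
  the ratios of the sums. Both bounds are approached on the caterpillar with clock-like edge
  lengths in which one edge \<open>e\<close> below the root has length 1 and all other edges on the paths
  to leaves 1 and \<open>n - 1\<close> have lengths tending to 0: for leaf 1, \<open>n(e) = n - 1\<close> and
  \<open>k = n - 2\<close>; for leaf \<open>n - 1\<close>, \<open>n(e) = n - 1\<close> and \<open>k = 1\<close>.\<close>

lemma leaves_Leaf [simp]: "leaves (Leaf x) = {x}"
  by (simp add: leaves_def)

lemma leaves_Node [simp]: "leaves (Node a b) = leaves a \<union> leaves b"
  by (simp add: leaves_def)

lemma finite_leaves [simp]: "finite (leaves t)"
  by (simp add: leaves_def)

lemma card_leaves_pos: "0 < card (leaves t)"
  by (induction t) (auto simp: card_gt_0_iff)

lemma card_leaves_Node:
  "distinct (leaf_list (Node a b)) \<Longrightarrow>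
    card (leaves (Node a b)) = card (leaves a) + card (leaves b)"
  by (simp add: leaves_def card_Un_disjoint)

lemma card_leaves_RB: "t \<in> RB n \<Longrightarrow> card (leaves t) = n"
  by (simp add: RB_def leaves_def)

lemma finite_pos: "finite (pos t)"
  by (induction t) auto

lemma leaves_subtree_subset: "p \<in> pos t \<Longrightarrow> leaves (subtree t p) \<subseteq> leaves t"
  by (induction t arbitrary: p) fastforce+

lemma nbelow_lt_card_leaves:
  assumes "distinct (leaf_list t)" "e \<in> edges t"
  shows "nbelow t e < card (leaves t)"
proof -
  obtain a b c e' where t: "t = Node a b" and e: "e = c # e'"
    and e': "e' \<in> pos (if c then b else a)"
  proof (cases t)
    case (Node a b)
    then show ?thesis
      using assms(2) that[of a b False] that[of a b True] by (auto simp: edges_def)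
  qed (use assms(2) in \<open>simp add: edges_def\<close>)
  have "nbelow t e \<le> card (leaves (if c then b else a))"
    using leaves_subtree_subset[OF e'] by (simp add: nbelow_def t e card_mono split: if_splits)
  also have "\<dots> < card (leaves t)"
    using card_leaves_Node[of a b] assms(1) card_leaves_pos[of a] card_leaves_pos[of b]
    by (simp add: t)
  finally show ?thesis .
qed

definition path_pos :: "ptree \<Rightarrow> nat \<Rightarrow> bool list set" where
  "path_pos t i = {p \<in> pos t. i \<in> leaves (subtree t p)}"

lemma finite_path_pos: "finite (path_pos t i)"
  using finite_pos by (simp add: path_pos_def)

lemma rpath_eq_path_pos: "rpath t i = path_pos t i - {[]}"
  by (auto simp: rpath_def path_pos_def edges_def)

lemma finite_rpath: "finite (rpath t i)"
  by (simp add: rpath_eq_path_pos finite_path_pos)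

lemma root_in_path_pos: "i \<in> leaves t \<Longrightarrow> [] \<in> path_pos t i"
  by (cases t) (auto simp: path_pos_def)

lemma path_pos_Leaf: "path_pos (Leaf x) i = (if i = x then {[]} else {})"
  by (auto simp: path_pos_def)

lemma path_pos_Node: "path_pos (Node a b) i =
    (if i \<in> leaves a \<union> leaves b then {[]} else {}) \<union>
    Cons False ` path_pos a i \<union> Cons True ` path_pos b i"
  by (auto simp: path_pos_def)

lemma path_pos_empty: "i \<notin> leaves t \<Longrightarrow> path_pos t i = {}"
  using leaves_subtree_subset by (auto simp: path_pos_def)

lemma path_pos_Node_left:
  "distinct (leaf_list (Node a b)) \<Longrightarrow> i \<in> leaves a \<Longrightarrow>
    path_pos (Node a b) i = insert [] (Cons False ` path_pos a i)"
  using path_pos_empty[of i b] by (auto simp: path_pos_Node leaves_def)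

lemma path_pos_Node_right:
  "distinct (leaf_list (Node a b)) \<Longrightarrow> i \<in> leaves b \<Longrightarrow>
    path_pos (Node a b) i = insert [] (Cons True ` path_pos b i)"
  using path_pos_empty[of i a] by (auto simp: path_pos_Node leaves_def)

lemma path_pos_Node_child:
  assumes "distinct (leaf_list (Node a b))" "i \<in> leaves (Node a b)"
  obtains c where "i \<in> leaves (if c then b else a)"
    "path_pos (Node a b) i = insert [] (Cons c ` path_pos (if c then b else a) i)"
proof (cases "i \<in> leaves a")
  case True
  then show ?thesis using that[of False] path_pos_Node_left[OF assms(1)] by simp
next
  case False
  then show ?thesis using that[of True] path_pos_Node_right[OF assms(1)] assms(2) by simp
qed

lemma card_path_pos_below_lt:
  assumes "distinct (leaf_list t)" "p \<in> path_pos t i"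
  shows "card {q \<in> path_pos t i. length p < length q} < card (leaves (subtree t p))"
  using assms
proof (induction t arbitrary: p)
  case (Leaf x)
  then show ?case by (auto simp: path_pos_Leaf split: if_splits)
next
  case (Node a b)
  have "i \<in> leaves (Node a b)"
    using Node.prems(2) path_pos_empty by fastforce
  then obtain c where i: "i \<in> leaves (if c then b else a)"
    and P: "path_pos (Node a b) i = insert [] (Cons c ` path_pos (if c then b else a) i)"
    using path_pos_Node_child Node.prems(1) by blast
  define x where "x = (if c then b else a)"
  have IH: "card {q \<in> path_pos x i. length p' < length q} < card (leaves (subtree x p'))"
    if "p' \<in> path_pos x i" for p'
    using Node.IH Node.prems(1) that by (cases c) (auto simp: x_def)
  show ?case
  proof (cases p)
    case Nil
    have root: "[] \<in> path_pos x i"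
      using i root_in_path_pos by (simp add: x_def)
    have "{q \<in> path_pos (Node a b) i. length p < length q} = Cons c ` path_pos x i"
      by (auto simp: Nil P x_def)
    then have "card {q \<in> path_pos (Node a b) i. length p < length q} = card (path_pos x i)"
      by (simp add: card_image)
    also have "\<dots> = Suc (card (path_pos x i - {[]}))"
      by (rule card_Suc_Diff1[OF finite_path_pos root, symmetric])
    also have "\<dots> = Suc (card {q \<in> path_pos x i. 0 < length q})"
      by (intro arg_cong[where f = "\<lambda>X. Suc (card X)"]) auto
    also have "\<dots> \<le> card (leaves x)"
      using IH[OF root] by simp
    also have "\<dots> < card (leaves (Node a b))"
      using card_leaves_Node[OF Node.prems(1)] card_leaves_pos[of a] card_leaves_pos[of b]
      by (simp add: x_def)
    finally show ?thesis by (simp add: Nil)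
  next
    case (Cons c' p')
    have p': "c' = c" "p' \<in> path_pos x i"
      using Node.prems(2) by (auto simp: Cons P x_def)
    have "{q \<in> path_pos (Node a b) i. length p < length q} =
        Cons c ` {q \<in> path_pos x i. length p' < length q}"
      by (auto simp: P Cons x_def)
    then have "card {q \<in> path_pos (Node a b) i. length p < length q} =
        card {q \<in> path_pos x i. length p' < length q}"
      by (simp add: card_image)
    moreover have "subtree (Node a b) p = subtree x p'"
      by (cases c) (simp_all add: Cons p'(1) x_def)
    ultimately show ?thesis using IH[OF p'(2)] by simp
  qed
qed

lemma subtree_eq_Leaf_at_path_end:
  "p \<in> path_pos t i \<Longrightarrow> {q \<in> path_pos t i. length p < length q} = {} \<Longrightarrow> subtree t p = Leaf i"
proof (induction t arbitrary: p)
  case (Leaf x)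
  then show ?case by (auto simp: path_pos_Leaf split: if_splits)
next
  case (Node a b)
  show ?case
  proof (cases p)
    case Nil
    have "i \<in> leaves a \<union> leaves b"
      using Node.prems(1) path_pos_empty[of i "Node a b"] by auto
    then have "[False] \<in> path_pos (Node a b) i \<or> [True] \<in> path_pos (Node a b) i"
      using root_in_path_pos[of i a] root_in_path_pos[of i b] by (auto simp: path_pos_Node)
    then show ?thesis
      using Node.prems(2) by (auto simp: Nil)
  next
    case (Cons c p')
    define x where "x = (if c then b else a)"
    have sub: "Cons c ` path_pos x i \<subseteq> path_pos (Node a b) i"
      by (auto simp: path_pos_Node x_def)
    have p': "p' \<in> path_pos x i"
      using Node.prems(1) by (cases c) (auto simp: Cons path_pos_Node x_def split: if_splits)
    moreover have "{q \<in> path_pos x i. length p' < length q} = {}"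
      using Node.prems(2) sub by (fastforce simp: Cons)
    ultimately have "subtree x p' = Leaf i"
      using Node.IH by (cases c) (simp_all add: x_def)
    then show ?thesis
      by (cases c) (simp_all add: Cons x_def)
  qed
qed

section \<open>Comparing FP and ES\<close>

lemma path_edge_bounds:
  assumes t: "t \<in> RB n" and e: "e \<in> rpath t i"
  defines "k \<equiv> card {e' \<in> rpath t i. length e < length e'}"
  shows "k < nbelow t e" and "nbelow t e < n" and "k = 0 \<Longrightarrow> nbelow t e = 1"
proof -
  have d: "distinct (leaf_list t)" using t by (simp add: RB_def)
  have e_pos: "e \<in> path_pos t i" "e \<noteq> []" using e by (auto simp: rpath_eq_path_pos)
  have k: "k = card {q \<in> path_pos t i. length e < length q}"
    unfolding k_def by (rule arg_cong[where f = card]) (auto simp: rpath_eq_path_pos)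
  show "k < nbelow t e"
    using card_path_pos_below_lt[OF d e_pos(1)] by (simp add: k nbelow_def)
  show "nbelow t e < n"
    using nbelow_lt_card_leaves[OF d] e card_leaves_RB[OF t] by (simp add: rpath_def)
  show "nbelow t e = 1" if "k = 0"
    using subtree_eq_Leaf_at_path_end[OF e_pos(1)] that finite_path_pos
    by (simp add: k nbelow_def)
qed

lemma sum_div_le_scaled:
  fixes l u v :: "'a \<Rightarrow> real"
  assumes "\<And>e. e \<in> A \<Longrightarrow> 0 \<le> l e" and "\<And>e. e \<in> A \<Longrightarrow> 1 / u e \<le> c / v e"
  shows "(\<Sum>e\<in>A. l e / u e) \<le> c * (\<Sum>e\<in>A. l e / v e)"
proof -
  have "l e / u e \<le> c * (l e / v e)" if "e \<in> A" for e
    using mult_left_mono[OF assms(2) assms(1), OF that that] by (simp add: mult.commute)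
  then show ?thesis
    by (simp add: sum_distrib_left sum_mono)
qed

lemma pow2_div_Suc_mono: "k \<le> j \<Longrightarrow> (2::real) ^ k / (real k + 1) \<le> 2 ^ j / (real j + 1)"
  by (rule lift_Suc_mono_le[of "\<lambda>j. 2 ^ j / (real j + 1)"]) (auto simp: field_simps)

lemma FP_le_ES:
  assumes t: "t \<in> RB n" and l: "l \<in> pos_lengths t"
  shows "FP t l i \<le> 2 ^ (n - 2) / (real n - 1) * ES t l i"
  unfolding FP_def ES_def
proof (rule sum_div_le_scaled)
  fix e assume e: "e \<in> rpath t i"
  show "0 \<le> l e" using l e by (simp add: pos_lengths_def rpath_def less_imp_le)
  define k where "k = card {e' \<in> rpath t i. length e < length e'}"
  define N where "N = nbelow t e"
  have kN: "k < N" and Nn: "N < n"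
    using path_edge_bounds[OF t e] by (simp_all add: k_def N_def)
  have "2 ^ k / real N \<le> (2::real) ^ k / (real k + 1)"
    using kN by (intro divide_left_mono) auto
  also have "\<dots> \<le> 2 ^ (n - 2) / (real (n - 2) + 1)"
    using kN Nn by (intro pow2_div_Suc_mono) simp
  also have "real (n - 2) + 1 = real n - 1"
    using kN Nn by linarith
  finally have "2 ^ k / real N / 2 ^ k \<le> 2 ^ (n - 2) / (real n - 1) / 2 ^ k"
    by (rule divide_right_mono) simp
  then show "1 / real (nbelow t e) \<le> 2 ^ (n - 2) / (real n - 1) / PiES t e i"
    by (simp add: PiES_def flip: k_def N_def)
qed

lemma ES_le_FP:
  assumes n: "3 \<le> n" and t: "t \<in> RB n" and l: "l \<in> pos_lengths t"
  shows "ES t l i \<le> (real n - 1) / 2 * FP t l i"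
  unfolding FP_def ES_def
proof (rule sum_div_le_scaled)
  fix e assume e: "e \<in> rpath t i"
  show "0 \<le> l e" using l e by (simp add: pos_lengths_def rpath_def less_imp_le)
  define k where "k = card {e' \<in> rpath t i. length e < length e'}"
  define N where "N = nbelow t e"
  have "real N / 2 ^ k \<le> (real n - 1) / 2"
  proof (cases k)
    case 0
    then show ?thesis
      using path_edge_bounds(3)[OF t e] n by (simp add: k_def N_def)
  next
    case (Suc k')
    have "real N \<le> real n - 1"
      using path_edge_bounds(2)[OF t e] by (simp add: N_def)
    moreover have "(2::real) \<le> 2 ^ k"
      using Suc by simp
    ultimately show ?thesis
      using n by (intro frac_le) auto
  qed
  then show "1 / PiES t e i \<le> (real n - 1) / 2 / real (nbelow t e)"
    using path_edge_bounds(1)[OF t e] by (simp add: PiES_def field_simps flip: k_def N_def)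
qed

lemma FP_nonneg: "l \<in> pos_lengths t \<Longrightarrow> 0 \<le> FP t l i"
  unfolding FP_def by (rule sum_nonneg) (auto simp: pos_lengths_def rpath_def less_imp_le)

lemma ES_nonneg: "l \<in> pos_lengths t \<Longrightarrow> 0 \<le> ES t l i"
  unfolding ES_def PiES_def by (rule sum_nonneg) (auto simp: pos_lengths_def rpath_def less_imp_le)

lemma Delta_le:
  assumes "0 \<le> c"
    and "\<And>t l i. t \<in> RB n \<Longrightarrow> l \<in> pos_lengths t \<Longrightarrow> 0 \<le> B t l i"
    and "\<And>t l i. t \<in> RB n \<Longrightarrow> l \<in> pos_lengths t \<Longrightarrow> A t l i \<le> c * B t l i"
  shows "Delta n A B \<le> ereal c"
  unfolding Delta_def
proof (intro SUP_least)
  fix t i l assume "t \<in> RB n" "l \<in> pos_lengths t"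
  then have "0 \<le> B t l i" "A t l i \<le> c * B t l i"
    using assms(2,3) by blast+
  then have "A t l i / B t l i \<le> c"
    using assms(1) by (cases "B t l i = 0") (auto simp: divide_le_eq mult.commute)
  then show "ereal (A t l i / B t l i) \<le> ereal c" by simp
qed

lemma Delta_MC_le_Delta: "Delta_MC n A B \<le> Delta n A B"
  unfolding Delta_def Delta_MC_def by (intro SUP_mono') (auto intro!: SUP_mono' SUP_subset_mono)

lemma Delta_MC_ge_limit:
  assumes "t \<in> RB n" "i \<in> {1..n}" "\<And>k. l k \<in> pos_lengths t \<and> MC n t (l k)"
    and "(\<lambda>k. A t (l k) i / B t (l k) i) \<longlonglongrightarrow> c"
  shows "ereal c \<le> Delta_MC n A B"
proof (rule LIMSEQ_le_const2)
  show "(\<lambda>k. ereal (A t (l k) i / B t (l k) i)) \<longlonglongrightarrow> ereal c"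
    using assms(4) by (rule tendsto_ereal)
  have "ereal (A t (l k) i / B t (l k) i) \<le> Delta_MC n A B" for k
    unfolding Delta_MC_def using assms(1-3)
    by (intro SUP_upper2[of t] SUP_upper2[of i] SUP_upper2[of "l k"]) auto
  then show "\<exists>N. \<forall>k\<ge>N. ereal (A t (l k) i / B t (l k) i) \<le> Delta_MC n A B" by blast
qed

section \<open>The extremal caterpillar\<close>

text \<open>The spine is the left branch: the spine vertex at depth \<open>d\<close> sits at position
  \<open>replicate d False\<close>, and the leaf \<open>m + 1 - d\<close> hangs from it at \<open>replicate d False @ [True]\<close>.\<close>
fun caterpillar :: "nat \<Rightarrow> ptree" where
  "caterpillar 0 = Leaf 1"
| "caterpillar (Suc m) = Node (caterpillar m) (Leaf (m + 2))"

lemma leaf_list_caterpillar: "leaf_list (caterpillar m) = [1..<m + 2]"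
  by (induction m) auto

lemma leaves_caterpillar: "leaves (caterpillar m) = {1..m + 1}"
  by (auto simp: leaves_def leaf_list_caterpillar)

lemma distinct_caterpillar: "distinct (leaf_list (caterpillar m))"
  by (simp add: leaf_list_caterpillar)

lemma caterpillar_RB: "caterpillar m \<in> RB (Suc m)"
  by (auto simp: RB_def leaf_list_caterpillar)

lemma pos_caterpillar:
  "p \<in> pos (caterpillar m) \<Longrightarrow>
    (\<exists>d\<le>m. p = replicate d False) \<or> (\<exists>d<m. p = replicate d False @ [True])"
proof (induction m arbitrary: p)
  case 0
  then show ?case by simp
next
  case (Suc m)
  then consider "p = []" | "p = [True]" | q where "q \<in> pos (caterpillar m)" "p = False # q"
    by auto
  then show ?case
  proof cases
    case 3
    then show ?thesis
      using Suc.IH[OF 3(1)] by (metis Suc_le_mono Suc_mono append_Cons replicate_Suc)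
  qed (use le0 zero_less_Suc replicate_0 append_Nil in metis)+
qed

lemma rpath_caterpillar_Suc:
  "j \<in> leaves (caterpillar m) \<Longrightarrow>
    rpath (caterpillar (Suc m)) j = Cons False ` insert [] (rpath (caterpillar m) j)"
  using distinct_caterpillar[of "Suc m"] path_pos_Node_left[of "caterpillar m" "Leaf (m + 2)" j]
    root_in_path_pos[of j "caterpillar m"]
  by (auto simp: rpath_eq_path_pos)

lemma rpath_caterpillar_last: "rpath (caterpillar (Suc m)) (m + 2) = {[True]}"
  using distinct_caterpillar[of "Suc m"]
    path_pos_Node_right[of "caterpillar m" "Leaf (m + 2)" "m + 2"]
  by (simp add: rpath_eq_path_pos path_pos_Leaf)

lemma caterpillar_path_length:
  fixes l :: "bool list \<Rightarrow> real" and h :: "nat \<Rightarrow> real"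
  assumes "\<And>d. 1 \<le> d \<Longrightarrow> l (replicate d False) = h (d - 1) - h d"
    and "\<And>d. l (replicate d False @ [True]) = h d" and "h m = 0"
    and "j \<in> {1..m + 1}"
  shows "(\<Sum>e\<in>rpath (caterpillar m) j. l e) = h 0"
  using assms
proof (induction m arbitrary: l h j)
  case 0
  then show ?case by (simp add: rpath_def edges_def)
next
  case (Suc m)
  show ?case
  proof (cases "j = m + 2")
    case True
    have "rpath (caterpillar (Suc m)) j = {[True]}"
      using rpath_caterpillar_last[of m] True by simp
    then show ?thesis using Suc.prems(2)[of 0] by simp
  next
    case False
    then have j: "j \<in> leaves (caterpillar m)"
      using Suc.prems(4) by (auto simp: leaves_caterpillar)
    have "l (False # replicate d False) = h d - h (Suc d)" if "1 \<le> d" for d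
      using Suc.prems(1)[of "Suc d"] that by simp
    moreover have "l (False # replicate d False @ [True]) = h (Suc d)" for d
      using Suc.prems(2)[of "Suc d"] by simp
    ultimately have "(\<Sum>e\<in>rpath (caterpillar m) j. l (False # e)) = h (Suc 0)"
      using Suc.prems(3) j
      by (intro Suc.IH[of "\<lambda>e. l (False # e)" "\<lambda>d. h (Suc d)"]) (auto simp: leaves_caterpillar)
    moreover have "[] \<notin> rpath (caterpillar m) j"
      by (simp add: rpath_eq_path_pos)
    ultimately have "(\<Sum>e\<in>insert [] (rpath (caterpillar m) j). l (False # e)) = h 0"
      using Suc.prems(1)[of 1] finite_rpath by simp
    moreover have "(\<Sum>e\<in>rpath (caterpillar (Suc m)) j. l e) =
        (\<Sum>e\<in>insert [] (rpath (caterpillar m) j). l (False # e))"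
      unfolding rpath_caterpillar_Suc[OF j]
      by (rule sum.reindex_cong[where l = "Cons False"]) (auto intro: inj_onI)
    ultimately show ?thesis by simp
  qed
qed

lemma rpath_caterpillar_first: "rpath (caterpillar m) 1 = (\<lambda>d. replicate d False) ` {1..m}"
proof (induction m)
  case 0
  then show ?case by (simp add: rpath_def edges_def)
next
  case (Suc m)
  have "rpath (caterpillar (Suc m)) 1 = Cons False ` (\<lambda>d. replicate d False) ` insert 0 {1..m}"
    using rpath_caterpillar_Suc[of 1 m] Suc.IH by (simp add: leaves_caterpillar)
  also have "insert 0 {1..m} = {0..m}"
    by auto
  also have "Cons False ` (\<lambda>d. replicate d False) ` {0..m} =
      (\<lambda>d. replicate d False) ` Suc ` {0..m}"
    unfolding image_image by simp
  also have "Suc ` {0..m} = {1..Suc m}"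
    by (simp add: image_Suc_atLeastAtMost)
  finally show ?case .
qed

lemma nbelow_caterpillar_False: "1 \<le> m \<Longrightarrow> nbelow (caterpillar m) [False] = m"
  by (cases m) (auto simp: nbelow_def leaves_caterpillar)

text \<open>\<open>clock_height m \<epsilon> d\<close> is the height of the spine vertex at depth \<open>d\<close> of
  \<open>caterpillar m\<close> and edge lengths are differences of heights, so the molecular clock holds.
  The first spine edge gets length 1, all other edges on the paths to leaves 1 and \<open>m\<close> are
  \<open>O(\<epsilon>)\<close>.\<close>
definition clock_height :: "nat \<Rightarrow> real \<Rightarrow> nat \<Rightarrow> real" where
  "clock_height m \<epsilon> d = (if d = 0 then 1 + (real m - 1) * \<epsilon> else (real m - real d) * \<epsilon>)"

definition clock_length :: "nat \<Rightarrow> real \<Rightarrow> bool list \<Rightarrow> real" where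
  "clock_length m \<epsilon> p =
    (if \<forall>x\<in>set p. \<not> x then clock_height m \<epsilon> (length p - 1) - clock_height m \<epsilon> (length p)
     else clock_height m \<epsilon> (length p - 1))"

lemma clock_length_spine:
  "clock_length m \<epsilon> (replicate d False) = clock_height m \<epsilon> (d - 1) - clock_height m \<epsilon> d"
  by (simp add: clock_length_def)

lemma clock_length_pendant: "clock_length m \<epsilon> (replicate d False @ [True]) = clock_height m \<epsilon> d"
  by (simp add: clock_length_def)

lemma clock_length_first_edge: "clock_length m \<epsilon> [False] = 1"
  using clock_length_spine[of m \<epsilon> 1] by (simp add: clock_height_def algebra_simps)

lemma clock_length_lower_spine: "2 \<le> d \<Longrightarrow> clock_length m \<epsilon> (replicate d False) = \<epsilon>"
  using clock_length_spine[of m \<epsilon> d] by (simp add: clock_height_def algebra_simps of_nat_diff)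

lemma clock_lengths_pos:
  assumes "1 \<le> m" "0 < \<epsilon>"
  shows "clock_length m \<epsilon> \<in> pos_lengths (caterpillar m)"
  unfolding pos_lengths_def
proof (intro CollectI ballI)
  fix p assume "p \<in> edges (caterpillar m)"
  then have p: "p \<in> pos (caterpillar m)" "p \<noteq> []" by (auto simp: edges_def)
  from pos_caterpillar[OF p(1)] show "0 < clock_length m \<epsilon> p"
  proof (elim disjE exE conjE)
    fix d assume d: "d \<le> m" "p = replicate d False"
    with p(2) have "d = 1 \<or> 2 \<le> d" by (cases d) auto
    then show ?thesis
      using d assms(2) clock_length_first_edge clock_length_lower_spine by auto
  next
    fix d assume "d < m" "p = replicate d False @ [True]"
    then show ?thesis
      using assms by (auto simp: clock_length_pendant clock_height_def intro!: add_pos_nonneg)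
  qed
qed

lemma clock_lengths_MC: "1 \<le> m \<Longrightarrow> MC (Suc m) (caterpillar m) (clock_length m \<epsilon>)"
  unfolding MC_def
  using caterpillar_path_length[of "clock_length m \<epsilon>" "clock_height m \<epsilon>"]
  by (simp add: clock_length_spine clock_length_pendant clock_height_def)

lemma sum_clock_lengths_first:
  assumes "1 \<le> m"
  shows "(\<Sum>e\<in>rpath (caterpillar m) 1. clock_length m \<epsilon> e / w e) =
    1 / w [False] + \<epsilon> * (\<Sum>e\<in>rpath (caterpillar m) 1 - {[False]}. 1 / w e)"
proof -
  have first: "[False] \<in> rpath (caterpillar m) 1"
    using assms unfolding rpath_caterpillar_first by (auto intro: image_eqI[where x = 1])
  have spine: "clock_length m \<epsilon> e = \<epsilon>" if e: "e \<in> rpath (caterpillar m) 1 - {[False]}" for e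
  proof -
    obtain d where "1 \<le> d" "e = replicate d False" "e \<noteq> [False]"
      using e[unfolded rpath_caterpillar_first] by auto
    then show ?thesis
      using clock_length_lower_spine[of d] by (cases "d = 1") auto
  qed
  have "(\<Sum>e\<in>rpath (caterpillar m) 1. clock_length m \<epsilon> e / w e) =
      clock_length m \<epsilon> [False] / w [False] +
      (\<Sum>e\<in>rpath (caterpillar m) 1 - {[False]}. clock_length m \<epsilon> e / w e)"
    by (rule sum.remove[OF finite_rpath first])
  also have "(\<Sum>e\<in>rpath (caterpillar m) 1 - {[False]}. clock_length m \<epsilon> e / w e) =
      (\<Sum>e\<in>rpath (caterpillar m) 1 - {[False]}. \<epsilon> * (1 / w e))"
    by (rule sum.cong) (simp_all add: spine)
  finally show ?thesis
    by (simp add: clock_length_first_edge sum_distrib_left)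
qed

lemma PiES_caterpillar_first: "1 \<le> m \<Longrightarrow> PiES (caterpillar m) [False] 1 = 2 ^ (m - 1)"
proof -
  assume "1 \<le> m"
  have "{e \<in> rpath (caterpillar m) 1. length [False] < length e} =
      (\<lambda>d. replicate d False) ` {2..m}"
    unfolding rpath_caterpillar_first by auto
  moreover have "inj (\<lambda>d. replicate d False)"
    by (rule injI) (metis length_replicate)
  ultimately show ?thesis
    by (simp add: PiES_def card_image inj_on_subset)
qed

lemma tendsto_ratio_perturbed:
  fixes a b A B :: real
  assumes "b \<noteq> 0"
  shows "(\<lambda>k. (a + inverse (real (Suc k)) * A) / (b + inverse (real (Suc k)) * B))
    \<longlonglongrightarrow> a / b"
proof -
  have "(\<lambda>k. (a + inverse (real (Suc k)) * A) / (b + inverse (real (Suc k)) * B)) \<longlonglongrightarrow>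
      (a + 0 * A) / (b + 0 * B)"
    using assms by (intro tendsto_intros LIMSEQ_inverse_real_of_nat) simp
  then show ?thesis by simp
qed

lemma Delta_MC_FP_ES_ge:
  assumes "1 \<le> m"
  shows "ereal (2 ^ (m - 1) / real m) \<le> Delta_MC (Suc m) FP ES"
proof (rule Delta_MC_ge_limit[OF caterpillar_RB])
  define \<epsilon> :: "nat \<Rightarrow> real" where "\<epsilon> k = inverse (real (Suc k))" for k
  show "clock_length m (\<epsilon> k) \<in> pos_lengths (caterpillar m) \<and>
      MC (Suc m) (caterpillar m) (clock_length m (\<epsilon> k))" for k
    using assms clock_lengths_pos clock_lengths_MC by (simp add: \<epsilon>_def)
  define A where
    "A = (\<Sum>e\<in>rpath (caterpillar m) 1 - {[False]}. 1 / real (nbelow (caterpillar m) e))"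
  define B where "B = (\<Sum>e\<in>rpath (caterpillar m) 1 - {[False]}. 1 / PiES (caterpillar m) e 1)"
  have "FP (caterpillar m) (clock_length m (\<epsilon> k)) 1 /
      ES (caterpillar m) (clock_length m (\<epsilon> k)) 1 =
      (1 / real m + \<epsilon> k * A) / (1 / 2 ^ (m - 1) + \<epsilon> k * B)" for k
    unfolding FP_def ES_def sum_clock_lengths_first[OF assms] A_def B_def
      nbelow_caterpillar_False[OF assms] PiES_caterpillar_first[OF assms] ..
  moreover have "(\<lambda>k. (1 / real m + \<epsilon> k * A) / (1 / 2 ^ (m - 1) + \<epsilon> k * B)) \<longlonglongrightarrow>
      (1 / real m) / (1 / 2 ^ (m - 1))"
    unfolding \<epsilon>_def by (rule tendsto_ratio_perturbed) simp
  ultimately show "(\<lambda>k. FP (caterpillar m) (clock_length m (\<epsilon> k)) 1 /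
      ES (caterpillar m) (clock_length m (\<epsilon> k)) 1) \<longlonglongrightarrow> 2 ^ (m - 1) / real m"
    by simp
qed (use assms in auto)

lemma Delta_MC_ES_FP_ge:
  assumes "2 \<le> m"
  shows "ereal (real m / 2) \<le> Delta_MC (Suc m) ES FP"
proof (rule Delta_MC_ge_limit[OF caterpillar_RB])
  define \<epsilon> :: "nat \<Rightarrow> real" where "\<epsilon> k = inverse (real (Suc k))" for k
  show "clock_length m (\<epsilon> k) \<in> pos_lengths (caterpillar m) \<and>
      MC (Suc m) (caterpillar m) (clock_length m (\<epsilon> k))" for k
    using assms clock_lengths_pos clock_lengths_MC by (simp add: \<epsilon>_def)
  obtain j where m: "m = Suc (Suc j)"
    using assms by (metis add_2_eq_Suc le_Suc_ex)
  have path: "rpath (caterpillar m) m = {[False], [False, True]}"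
    using rpath_caterpillar_Suc[of m "Suc j"] rpath_caterpillar_last[of j]
    by (simp add: m leaves_caterpillar)
  have nbelow: "nbelow (caterpillar m) [False] = m" "nbelow (caterpillar m) [False, True] = 1"
    using nbelow_caterpillar_False[of m] by (simp_all add: m nbelow_def)
  have below: "{e \<in> {[False], [False, True]}. length [False] < length e} = {[False, True]}"
    "{e \<in> {[False], [False, True]}. length [False, True] < length e} = {}"
    by auto
  have PiES: "PiES (caterpillar m) [False] m = 2" "PiES (caterpillar m) [False, True] m = 1"
    unfolding PiES_def path below by simp_all
  have lengths: "clock_length m x [False] = 1" "clock_length m x [False, True] = x * (real m - 1)"
    for x
    using clock_length_first_edge clock_length_pendant[of m x 1] by (simp_all add: clock_height_def)
  have "ES (caterpillar m) (clock_length m (\<epsilon> k)) m /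
      FP (caterpillar m) (clock_length m (\<epsilon> k)) m =
      (1 / 2 + \<epsilon> k * (real m - 1)) / (1 / real m + \<epsilon> k * (real m - 1))" for k
    by (simp add: ES_def FP_def path nbelow PiES lengths)
  moreover have "(\<lambda>k. (1 / 2 + \<epsilon> k * (real m - 1)) / (1 / real m + \<epsilon> k * (real m - 1))) \<longlonglongrightarrow>
      (1 / 2) / (1 / real m)"
    unfolding \<epsilon>_def by (rule tendsto_ratio_perturbed) (use assms in simp)
  ultimately show "(\<lambda>k. ES (caterpillar m) (clock_length m (\<epsilon> k)) m /
      FP (caterpillar m) (clock_length m (\<epsilon> k)) m) \<longlonglongrightarrow> real m / 2"
    by simp
qed (use assms in auto)

theorem theorem1:
  fixes n :: nat
  assumes "n \<ge> 3"
  shows "Delta n FP ES = ereal (2 ^ (n - 2) / (real n - 1)) \<and>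
         Delta n ES FP = ereal ((real n - 1) / 2) \<and>
         Delta_MC n FP ES = ereal (2 ^ (n - 2) / (real n - 1)) \<and>
         Delta_MC n ES FP = ereal ((real n - 1) / 2)"
proof -
  obtain m where n: "n = Suc m" and m: "2 \<le> m"
    using assms by (intro that[of "n - 1"]) auto
  have FP_ES: "Delta n FP ES \<le> ereal (2 ^ (n - 2) / (real n - 1))"
    using assms by (intro Delta_le) (simp, blast intro: ES_nonneg, blast intro: FP_le_ES)
  have ES_FP: "Delta n ES FP \<le> ereal ((real n - 1) / 2)"
    using assms by (intro Delta_le) (simp, blast intro: FP_nonneg, blast intro: ES_le_FP)
  have FP_ES_MC: "ereal (2 ^ (n - 2) / (real n - 1)) \<le> Delta_MC n FP ES"
    using Delta_MC_FP_ES_ge[of m] m by (simp add: n)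
  have ES_FP_MC: "ereal ((real n - 1) / 2) \<le> Delta_MC n ES FP"
    using Delta_MC_ES_FP_ge[OF m] by (simp add: n)
  show ?thesis
    using FP_ES ES_FP FP_ES_MC ES_FP_MC Delta_MC_le_Delta[of n FP ES] Delta_MC_le_Delta[of n ES FP]
    by (auto intro: antisym order.trans)
qed

end
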